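(* Let $\beta>0$, set $\alpha=1/\beta$, and let $m,n\ge 1$ be integers and $\mathbf{M}$ a real $m\times n$ matrix. Let $\mathbf{x}^{n,\beta}\in\mathbb{H}^{n,\beta}$ and let $\mathbf{x}^{n,\alpha}=p_{\mathbb{H}^{n,\beta}\to\mathbb{D}^{n,\alpha}}(\mathbf{x}^{n,\beta})\in\mathbb{D}^{n,\alpha}$ be the same point of hyperbolic space represented in the Poincar\'e ball model. Then the Lorentzian matrix-vector multiplication and the M\"obius matrix-vector multiplication are equivalent, i.e. $$p_{\mathbb{H}^{m,\beta}\to\mathbb{D}^{m,\alpha}}\big(\mathbf{M}\otimes^{\beta}\mathbf{x}^{n,\beta}\big)=\mathbf{M}\otimes^{\alpha}\mathbf{x}^{n,\alpha}.$$
   Context: Lorentzian scalar product on $\mathbb{R}^{n+1}$: $\langle \mathbf{x},\mathbf{y}\rangle_{\mathcal{L}}=-x_0y_0+\sum_{i=1}^n x_iy_i$, and $\|\mathbf{v}\|_{\mathcal{L}}=\sqrt{\langle\mathbf{v},\mathbf{v}\rangle_{\mathcal{L}}}$. Hyperboloid model: $\mathbb{H}^{n,\beta}=\{\mathbf{x}\in\mathbb{R}^{n+1}:\langle\mathbf{x},\mathbf{x}\rangle_{\mathcal{L}}=-\beta,\ x_0>0\}$, with origin $\mathbf{0}=(\sqrt{\beta},0,\dots,0)$ and tangent space $\mathcal{T}_{\mathbf{0}}\mathbb{H}^{n,\beta}=\{\mathbf{v}:\langle\mathbf{v},\mathbf{0}\rangle_{\mathcal{L}}=0\}=\{\mathbf{v}:v_0=0\}$.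 Intrinsic distance $d^\beta_{\mathbb{H}}(\mathbf{x},\mathbf{y})=\sqrt{\beta}\,\mathrm{arcosh}(-\langle\mathbf{x},\mathbf{y}\rangle_{\mathcal{L}}/\beta)$. Exponential map at the origin: for $\mathbf{v}\in\mathcal{T}_{\mathbf{0}}\mathbb{H}^{n,\beta}$, $\mathbf{v}\neq 0$, $\exp^\beta_{\mathbf{0}}(\mathbf{v})=\cosh(\|\mathbf{v}\|_{\mathcal{L}}/\sqrt{\beta})\mathbf{0}+\sqrt{\beta}\sinh(\|\mathbf{v}\|_{\mathcal{L}}/\sqrt{\beta})\,\mathbf{v}/\|\mathbf{v}\|_{\mathcal{L}}$, and $\exp^\beta_{\mathbf{0}}(0)=\mathbf{0}$. Logarithmic map at the origin: for $\mathbf{y}\in\mathbb{H}^{n,\beta}$, $\mathbf{y}\ne\mathbf{0}$, $\log^\beta_{\mathbf{0}}(\mathbf{y})=d^\beta_{\mathbb{H}}(\mathbf{0},\mathbf{y})\,\frac{\mathbf{y}+\frac1\beta\langle\mathbf{0},\mathbf{y}\rangle_{\mathcal{L}}\mathbf{0}}{\|\mathbf{y}+\frac1\beta\langle\mathbf{0},\mathbf{y}\rangle_{\mathcal{L}}\mathbf{0}\|_{\mathcal{L}}}$, and $\log^\beta_{\mathbf{0}}(\mathbf{0})=0$. Lorentzian matrix-vector multiplication: for $\mathbf{x}\in\mathbb{H}^{n,\beta}$, writing $\log^\beta_{\mathbf{0}}(\mathbf{x})=(v_0,v_1,\dots,v_n)$, set $\hat{\mathbf{M}}(\mathbf{v})=(0,\mathbf{M}(v_1,\dots,v_n)^T)\in\mathbb{R}^{m+1}$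 and $\mathbf{M}\otimes^\beta\mathbf{x}=\exp^\beta_{\mathbf{0}}(\hat{\mathbf{M}}(\log^\beta_{\mathbf{0}}(\mathbf{x})))\in\mathbb{H}^{m,\beta}$ (exponential map of $\mathbb{H}^{m,\beta}$). Poincar\'e ball model: $\mathbb{D}^{n,\alpha}=\{\mathbf{x}\in\mathbb{R}^n:\alpha\|\mathbf{x}\|^2<1\}$ (Euclidean norm). M\"obius matrix-vector multiplication: $\mathbf{M}\otimes^\alpha\mathbf{x}=\frac{1}{\sqrt{\alpha}}\tanh\!\Big(\frac{\|\mathbf{M}\mathbf{x}\|}{\|\mathbf{x}\|}\tanh^{-1}(\sqrt{\alpha}\|\mathbf{x}\|)\Big)\frac{\mathbf{M}\mathbf{x}}{\|\mathbf{M}\mathbf{x}\|}$ for $\mathbf{M}\mathbf{x}\neq 0$, and $=0$ if $\mathbf{M}\mathbf{x}=0$. Isometry between models: $p_{\mathbb{H}^{n,\beta}\to\mathbb{D}^{n,\alpha}}(x_0,x_1,\dots,x_n)=\frac{\sqrt{\beta}(x_1,\dots,x_n)}{\sqrt{\beta}+x_0}$. *)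

theory Defs
  imports "HOL-Analysis.Analysis"
begin

text \<open>A point of R^(n+1) is represented as a pair (x0, (x1..xn)) :: real \<times> (real^'n),
  the spatial dimension n being the (arbitrary finite) cardinality of the index type 'n.\<close>

definition lorentz_inner :: "real \<times> 'a::real_inner \<Rightarrow> real \<times> 'a \<Rightarrow> real" where
  "lorentz_inner x y = - (fst x * fst y) + snd x \<bullet> snd y"

definition lorentz_norm :: "real \<times> 'a::real_inner \<Rightarrow> real" where
  "lorentz_norm v = sqrt (lorentz_inner v v)"

definition hyperboloid :: "real \<Rightarrow> (real \<times> 'a::real_inner) set" where
  "hyperboloid \<beta> = {x. lorentz_inner x x = - \<beta> \<and> fst x > 0}"

definition hyp_origin :: "real \<Rightarrow> real \<times> 'a::real_inner" where
  "hyp_origin \<beta> = (sqrt \<beta>, 0)"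

definition hyp_dist :: "real \<Rightarrow> real \<times> 'a::real_inner \<Rightarrow> real \<times> 'a \<Rightarrow> real" where
  "hyp_dist \<beta> x y = sqrt \<beta> * arcosh (- lorentz_inner x y / \<beta>)"

definition hyp_exp0 :: "real \<Rightarrow> real \<times> 'a::real_inner \<Rightarrow> real \<times> 'a" where
  "hyp_exp0 \<beta> v = (if v = 0 then hyp_origin \<beta> else
     cosh (lorentz_norm v / sqrt \<beta>) *\<^sub>R hyp_origin \<beta>
     + (sqrt \<beta> * sinh (lorentz_norm v / sqrt \<beta>)) *\<^sub>R ((1 / lorentz_norm v) *\<^sub>R v))"

definition hyp_log0 :: "real \<Rightarrow> real \<times> 'a::real_inner \<Rightarrow> real \<times> 'a" where
  "hyp_log0 \<beta> y = (if y = hyp_origin \<beta> then 0 else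
     (let w = y + ((1 / \<beta>) * lorentz_inner (hyp_origin \<beta>) y) *\<^sub>R hyp_origin \<beta>
      in hyp_dist \<beta> (hyp_origin \<beta>) y *\<^sub>R ((1 / lorentz_norm w) *\<^sub>R w)))"

definition lorentz_mv :: "real \<Rightarrow> real^'n^'m \<Rightarrow> real \<times> (real^'n) \<Rightarrow> real \<times> (real^'m)" where
  "lorentz_mv \<beta> M x = hyp_exp0 \<beta> (0, M *v snd (hyp_log0 \<beta> x))"

definition poincare_ball :: "real \<Rightarrow> 'a::real_normed_vector set" where
  "poincare_ball \<alpha> = {x. \<alpha> * (norm x)^2 < 1}"

definition mobius_mv :: "real \<Rightarrow> real^'n^'m \<Rightarrow> real^'n \<Rightarrow> real^'m" where
  "mobius_mv \<alpha> M x = (if M *v x = 0 then 0 else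
     ((1 / sqrt \<alpha>) * tanh (norm (M *v x) / norm x * artanh (sqrt \<alpha> * norm x)))
       *\<^sub>R ((1 / norm (M *v x)) *\<^sub>R (M *v x)))"

definition hyp_to_ball :: "real \<Rightarrow> real \<times> 'a::real_vector \<Rightarrow> 'a" where
  "hyp_to_ball \<beta> x = (sqrt \<beta> / (sqrt \<beta> + fst x)) *\<^sub>R snd x"

end

theory Submission
  imports Defs
begin

text \<open>Both multiplications are conjugates of the linear map M by exponential maps at the
  origin. Writing x = exp0(w), the isometry p turns the hyperboloid's exponential map into
  the Poincare ball's: p(exp0(w)) = exp0(w/2), the factor 1/2 being the differential of p at
  the origin. The ball's exponential map is radial, v \<mapsto> tanh(\<surd>\<alpha> |v|) v / (\<surd>\<alpha> |v|), so
  M \<otimes> exp0(v) = exp0(M v): the length of v enters only through artanh \<circ> tanh and the ratio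
  |M v| / |v|. Hence both sides equal exp0(M w / 2).\<close>

lemma tanh_half: "tanh (x / 2) = sinh x / (1 + cosh (x::real))"
proof -
  have "sinh x / (1 + cosh x) = 2 * sinh (x/2) * cosh (x/2) / (2 * (cosh (x/2))\<^sup>2)"
    using sinh_double[of "x/2"] cosh_double_cosh[of "x/2"] by simp
  also have "\<dots> = tanh (x / 2)"
    by (simp add: tanh_def power2_eq_square)
  finally show ?thesis ..
qed

lemma lorentz_norm_tangent [simp]: "lorentz_norm (0, w) = norm w"
  by (simp add: lorentz_norm_def lorentz_inner_def norm_eq_sqrt_inner)

lemma mem_hyperboloid_iff:
  "(x0, u) \<in> hyperboloid \<beta> \<longleftrightarrow> x0\<^sup>2 = \<beta> + (norm u)\<^sup>2 \<and> x0 > 0"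
  by (auto simp: hyperboloid_def lorentz_inner_def power2_eq_square dot_square_norm)

lemma hyp_exp0_tangent:
  "hyp_exp0 \<beta> (0, w) =
     (sqrt \<beta> * cosh (norm w / sqrt \<beta>), (sqrt \<beta> * sinh (norm w / sqrt \<beta>) / norm w) *\<^sub>R w)"
  by (simp add: hyp_exp0_def hyp_origin_def zero_prod_def)

lemma hyp_log0_eq:
  assumes "\<beta> > 0" and "(x0, u) \<in> hyperboloid \<beta>"
  shows "hyp_log0 \<beta> (x0, u) = (0, (sqrt \<beta> * arcosh (x0 / sqrt \<beta>) / norm u) *\<^sub>R u)"
proof (cases "u = 0")
  case True
  with assms have "x0 = sqrt \<beta>"
    by (auto simp: mem_hyperboloid_iff intro: real_sqrt_unique[symmetric])
  with True show ?thesis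
    by (simp add: hyp_log0_def hyp_origin_def zero_prod_def)
next
  case False
  have s: "sqrt \<beta> * sqrt \<beta> = \<beta>" "sqrt \<beta> > 0"
    using assms(1) by simp_all
  have direction:
    "(x0, u) + ((1 / \<beta>) * lorentz_inner (hyp_origin \<beta>) (x0, u)) *\<^sub>R hyp_origin \<beta> = (0, u)"
    using s by (simp add: lorentz_inner_def hyp_origin_def field_simps)
  have "sqrt \<beta> * x0 / \<beta> = x0 / sqrt \<beta>"
    using s by (simp add: field_simps)
  then have dist: "hyp_dist \<beta> (hyp_origin \<beta>) (x0, u) = sqrt \<beta> * arcosh (x0 / sqrt \<beta>)"
    by (simp add: hyp_dist_def lorentz_inner_def hyp_origin_def)
  from direction dist show ?thesis
    using False by (simp add: hyp_log0_def hyp_origin_def)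
qed

lemma fst_hyp_log0:
  assumes "\<beta> > 0" and "x \<in> hyperboloid \<beta>"
  shows "fst (hyp_log0 \<beta> x) = 0"
  using assms by (cases x) (simp add: hyp_log0_eq)

lemma hyp_exp0_hyp_log0:
  assumes "\<beta> > 0" and "x \<in> hyperboloid \<beta>"
  shows "hyp_exp0 \<beta> (hyp_log0 \<beta> x) = x"
proof -
  obtain x0 u where x: "x = (x0, u)" by fastforce
  have hyp: "x0\<^sup>2 = \<beta> + (norm u)\<^sup>2" "x0 > 0"
    using assms(2) by (simp_all add: x mem_hyperboloid_iff)
  show ?thesis
  proof (cases "u = 0")
    case True
    with hyp have "x0 = sqrt \<beta>"
      by (auto intro: real_sqrt_unique[symmetric])
    with True assms show ?thesis
      by (simp add: x hyp_log0_eq hyp_exp0_tangent)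
  next
    case False
    define c where "c = x0 / sqrt \<beta>"
    have c2: "c\<^sup>2 - 1 = (norm u / sqrt \<beta>)\<^sup>2"
      using assms(1) hyp by (simp add: c_def power_divide field_simps)
    then have norm_u: "sqrt \<beta> * sqrt (c\<^sup>2 - 1) = norm u"
      using assms(1) by simp
    have "(norm u / sqrt \<beta>)\<^sup>2 > 0"
      using assms(1) False by simp
    then have "1 < c\<^sup>2"
      using c2 by linarith
    then have c: "c > 1"
      using assms(1) hyp(2) power2_less_imp_less[of 1 c] by (simp add: c_def)
    define d where "d = sqrt \<beta> * arcosh c"
    have "d > 0" using assms(1) c by (simp add: d_def)
    then have "hyp_exp0 \<beta> (0, (d / norm u) *\<^sub>R u) =
        (sqrt \<beta> * c, (sqrt \<beta> * sqrt (c\<^sup>2 - 1) / norm u) *\<^sub>R u)"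
      using assms(1) c False by (simp add: hyp_exp0_tangent d_def sinh_arcosh_real)
    also have "\<dots> = x"
      using assms(1) False unfolding norm_u by (simp add: x c_def)
    finally show ?thesis
      using assms by (simp add: x hyp_log0_eq d_def c_def)
  qed
qed

text \<open>At v = 0 the division by zero yields the correct value 0.\<close>

definition ball_exp0 :: "real \<Rightarrow> 'a::real_normed_vector \<Rightarrow> 'a" where
  "ball_exp0 \<alpha> v = (tanh (sqrt \<alpha> * norm v) / (sqrt \<alpha> * norm v)) *\<^sub>R v"

lemma hyp_to_ball_hyp_exp0:
  assumes "\<beta> > 0"
  shows "hyp_to_ball \<beta> (hyp_exp0 \<beta> (0, w)) = ball_exp0 (1 / \<beta>) ((1 / 2) *\<^sub>R w)"
proof -
  define t where "t = norm w / sqrt \<beta>"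
  have "sqrt \<beta> + sqrt \<beta> * cosh t = sqrt \<beta> * (1 + cosh t)" "1 + cosh t > 0"
    by (simp_all add: algebra_simps add_pos_pos)
  then have "hyp_to_ball \<beta> (hyp_exp0 \<beta> (0, w)) = (sqrt \<beta> * (sinh t / (1 + cosh t)) / norm w) *\<^sub>R w"
    using assms by (simp add: hyp_to_ball_def hyp_exp0_tangent t_def[symmetric])
  also have "\<dots> = (tanh (t / 2) / t) *\<^sub>R w"
    unfolding tanh_half by (simp add: t_def)
  also have "\<dots> = ball_exp0 (1 / \<beta>) ((1 / 2) *\<^sub>R w)"
    by (simp add: ball_exp0_def t_def real_sqrt_divide field_simps)
  finally show ?thesis .
qed

lemma mobius_mv_ball_exp0:
  fixes M :: "real^'n^'m"
  assumes "\<alpha> > 0"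
  shows "mobius_mv \<alpha> M (ball_exp0 \<alpha> v) = ball_exp0 \<alpha> (M *v v)"
proof -
  define k where "k = tanh (sqrt \<alpha> * norm v) / (sqrt \<alpha> * norm v)"
  have y: "ball_exp0 \<alpha> v = k *\<^sub>R v"
    by (simp add: ball_exp0_def k_def)
  show ?thesis
  proof (cases "M *v v = 0 \<or> v = 0")
    case True
    then have "M *v v = 0"
      by auto
    then show ?thesis
      unfolding mobius_mv_def y by (simp add: ball_exp0_def matrix_vector_mult_scaleR)
  next
    case False
    then have "k > 0"
      using assms by (simp add: k_def)
    moreover have "artanh (sqrt \<alpha> * norm (k *\<^sub>R v)) = sqrt \<alpha> * norm v"
      using assms \<open>k > 0\<close> by (simp add: k_def artanh_tanh_real)
    ultimately have "mobius_mv \<alpha> M (ball_exp0 \<alpha> v) =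
        ((1 / sqrt \<alpha>) * tanh (norm (M *v v) / norm v * (sqrt \<alpha> * norm v)))
          *\<^sub>R ((1 / norm (M *v v)) *\<^sub>R (M *v v))"
      using False unfolding mobius_mv_def y matrix_vector_mult_scaleR by simp
    also have "\<dots> = ball_exp0 \<alpha> (M *v v)"
      using False by (simp add: ball_exp0_def)
    finally show ?thesis .
  qed
qed

theorem theorem3p1:
  fixes \<beta> \<alpha> :: real and M :: "real^'n^'m" and x :: "real \<times> (real^'n)"
  assumes "\<beta> > 0" and "\<alpha> = 1 / \<beta>" and "x \<in> hyperboloid \<beta>"
  shows "hyp_to_ball \<beta> (lorentz_mv \<beta> M x) = mobius_mv \<alpha> M (hyp_to_ball \<beta> x)"
proof -
  define w where "w = snd (hyp_log0 \<beta> x)"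
  have log: "hyp_log0 \<beta> x = (0, w)"
    using fst_hyp_log0[OF assms(1,3)] by (simp add: w_def prod_eq_iff)
  then have x: "x = hyp_exp0 \<beta> (0, w)"
    using hyp_exp0_hyp_log0[OF assms(1,3)] by simp
  have "hyp_to_ball \<beta> (lorentz_mv \<beta> M x) = ball_exp0 \<alpha> (M *v ((1 / 2) *\<^sub>R w))"
    using assms(1,2) by (simp add: lorentz_mv_def log hyp_to_ball_hyp_exp0 matrix_vector_mult_scaleR)
  also have "\<dots> = mobius_mv \<alpha> M (ball_exp0 \<alpha> ((1 / 2) *\<^sub>R w))"
    using assms(1,2) by (simp add: mobius_mv_ball_exp0)
  also have "ball_exp0 \<alpha> ((1 / 2) *\<^sub>R w) = hyp_to_ball \<beta> x"
    using assms(1,2) x by (simp add: hyp_to_ball_hyp_exp0)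
  finally show ?thesis .
qed

end
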